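(* Let $f,g\in\mathrm{Diff}(\mathbb{C},0)$ be two holomorphic diffeomorphisms fixing the origin, both distinct from the identity, and let $W(a,b)$ be a non-trivial reduced word in $a,a^{-1},b,b^{-1}$. If there exists a formal series $\hat h\in\widehat{\mathrm{Diff}}(\mathbb{C},0)$ such that $W(f,\hat h^{-1}\circ g\circ\hat h)\neq\mathrm{id}$, then there also exists $h\in\mathrm{Diff}(\mathbb{C},0)$ such that $W(f,h^{-1}\circ g\circ h)\neq\mathrm{id}$. In fact, the set of $h\in\mathrm{Diff}(\mathbb{C},0)$ such that $W(f,h^{-1}\circ g\circ h)\neq\mathrm{id}$ is open and dense for the analytic topology.
   Context: $\mathrm{Diff}(\mathbb{C},0)$ is the group of germs of holomorphic diffeomorphisms of $\mathbb{C}$ fixing $0$; $\widehat{\mathrm{Diff}}(\mathbb{C},0)$ is the group (under composition) of formal series $\sum_{i\ge1}c_ix^i$ with $c_1\neq0$, into which $\mathrm{Diff}(\mathbb{C},0)$ injects via Taylor series at $0$. $W(f,g)$ denotes the element obtained by substituting $a=f$, $a^{-1}=f^{-1}$, $b=g$, $b^{-1}=g^{-1}$ and composing (as germs or formal series). Analytic topology: for $r>0$ and $h$ holomorphic near $0$, $\|h\|_r=\sup_{B(r)}|h|$ if $h$ extends holomorphically to the open disc $B(r)$ of radius $r$, and $+\infty$ otherwise; a basis of open sets of $\mathrm{Diff}(\mathbb{C},0)$ is given by the sets $\{g:\|g-f\|_r<\varepsilon\}$, $f\in\mathrm{Diff}(\mathbb{C},0)$, $r,\varepsilon>0$. *)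

theory Defs
  imports "HOL-Complex_Analysis.Complex_Analysis"
begin

text \<open>A germ at 0 is represented by a function defined (at least) near 0; two functions
  represent the same germ iff they agree on a neighbourhood of 0.\<close>

definition germ_eq :: "(complex \<Rightarrow> complex) \<Rightarrow> (complex \<Rightarrow> complex) \<Rightarrow> bool" where
  "germ_eq f g \<longleftrightarrow> (\<forall>\<^sub>F z in nhds 0. f z = g z)"

definition Diff0 :: "(complex \<Rightarrow> complex) set" where
  "Diff0 = {f. f analytic_on {0} \<and> f 0 = 0 \<and> deriv f 0 \<noteq> 0}"

definition germ_inv :: "(complex \<Rightarrow> complex) \<Rightarrow> (complex \<Rightarrow> complex)" where
  "germ_inv f = (SOME k. k \<in> Diff0 \<and> germ_eq (f \<circ> k) id \<and> germ_eq (k \<circ> f) id)"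

text \<open>Formal diffeomorphisms: formal series without constant term and with
  non-zero linear coefficient; group law = composition (oo), inverse = fps_inv.\<close>

definition FDiff0 :: "complex fps set" where
  "FDiff0 = {F. F $ 0 = 0 \<and> F $ 1 \<noteq> 0}"

datatype letter = A | Ainv | B | Binv

fun letter_inv :: "letter \<Rightarrow> letter" where
  "letter_inv A = Ainv" | "letter_inv Ainv = A" | "letter_inv B = Binv" | "letter_inv Binv = B"

definition reduced_word :: "letter list \<Rightarrow> bool" where
  "reduced_word w \<longleftrightarrow> (\<forall>i. Suc i < length w \<longrightarrow> w ! Suc i \<noteq> letter_inv (w ! i))"

fun letter_val :: "'a \<Rightarrow> 'a \<Rightarrow> 'a \<Rightarrow> 'a \<Rightarrow> letter \<Rightarrow> 'a" where
  "letter_val a ai b bi A = a" | "letter_val a ai b bi Ainv = ai"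
| "letter_val a ai b bi B = b" | "letter_val a ai b bi Binv = bi"

definition word_eval :: "('a \<Rightarrow> 'a \<Rightarrow> 'a) \<Rightarrow> 'a \<Rightarrow> 'a \<Rightarrow> 'a \<Rightarrow> 'a \<Rightarrow> 'a \<Rightarrow> letter list \<Rightarrow> 'a" where
  "word_eval cmp one a ai b bi w = foldr (\<lambda>l acc. cmp (letter_val a ai b bi l) acc) w one"

definition germ_word :: "letter list \<Rightarrow> (complex \<Rightarrow> complex) \<Rightarrow> (complex \<Rightarrow> complex) \<Rightarrow> (complex \<Rightarrow> complex)" where
  "germ_word w f g = word_eval (\<lambda>p q. p \<circ> q) (\<lambda>z. z) f (germ_inv f) g (germ_inv g) w"

definition fps_word :: "letter list \<Rightarrow> complex fps \<Rightarrow> complex fps \<Rightarrow> complex fps" where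
  "fps_word w F G = word_eval (\<lambda>P Q. P oo Q) fps_X F (fps_inv F) G (fps_inv G) w"

definition extends_to_ball :: "real \<Rightarrow> (complex \<Rightarrow> complex) \<Rightarrow> (complex \<Rightarrow> complex) \<Rightarrow> bool" where
  "extends_to_ball r h F \<longleftrightarrow> F holomorphic_on ball 0 r \<and> germ_eq F h"

definition germ_norm :: "real \<Rightarrow> (complex \<Rightarrow> complex) \<Rightarrow> ereal" where
  "germ_norm r h = (if \<exists>F. extends_to_ball r h F
      then (SUP z\<in>ball 0 r. ereal (norm ((SOME F. extends_to_ball r h F) z)))
      else \<infinity>)"

definition analytic_open :: "(complex \<Rightarrow> complex) set \<Rightarrow> bool" where
  "analytic_open S \<longleftrightarrow> S \<subseteq> Diff0 \<and>
     (\<forall>h\<in>S. \<exists>r>0. \<exists>\<epsilon>>0. \<forall>k\<in>Diff0. germ_norm r (\<lambda>z. k z - h z) < ereal \<epsilon> \<longrightarrow> k \<in> S)"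

definition analytic_dense :: "(complex \<Rightarrow> complex) set \<Rightarrow> bool" where
  "analytic_dense S \<longleftrightarrow>
     (\<forall>f\<in>Diff0. \<forall>r>0. \<forall>\<epsilon>>0. \<exists>k\<in>S. k \<in> Diff0 \<and> germ_norm r (\<lambda>z. k z - f z) < ereal \<epsilon>)"

end

theory Submission
  imports Defs
begin

text \<open>A germ is determined by its Taylor series, so W(f, h^-1 g h) is the identity iff the formal
  word W(F, H^-1 G H) in the Taylor series F, G, H of f, g, h equals X. Each coefficient of that
  word is a rational function of finitely many coefficients of H, with powers of h'(0) as
  denominators. Openness follows because Cauchy estimates make Taylor coefficients continuous
  for the analytic topology. For density near a germ f0, choose a polynomial q agreeing with the
  given formal conjugator minus f0 to high order: along the line f0 + t q some coefficient of the
  word minus X is a holomorphic function of t that does not vanish at t = 1, hence by the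
  identity theorem it does not vanish for arbitrarily small t.\<close>

unbundle no vec_syntax

section \<open>Coefficientwise holomorphy and convergence of formal power series\<close>

definition fps_coeffs_holomorphic_on :: "(complex \<Rightarrow> complex fps) \<Rightarrow> complex set \<Rightarrow> bool" where
  "fps_coeffs_holomorphic_on P U \<longleftrightarrow> (\<forall>i. (\<lambda>t. P t $ i) holomorphic_on U)"

definition fps_coeffs_tendsto :: "('p \<Rightarrow> complex fps) \<Rightarrow> complex fps \<Rightarrow> 'p filter \<Rightarrow> bool" where
  "fps_coeffs_tendsto P Q F \<longleftrightarrow> (\<forall>i. ((\<lambda>x. P x $ i) \<longlongrightarrow> Q $ i) F)"

lemma fps_coeffs_holomorphic_const: "fps_coeffs_holomorphic_on (\<lambda>_. P) U"
  by (simp add: fps_coeffs_holomorphic_on_def)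

lemma fps_coeffs_tendsto_const: "fps_coeffs_tendsto (\<lambda>_. P) P F"
  by (simp add: fps_coeffs_tendsto_def)

lemma fps_coeffs_holomorphic_mult:
  "fps_coeffs_holomorphic_on P U \<Longrightarrow> fps_coeffs_holomorphic_on Q U \<Longrightarrow>
    fps_coeffs_holomorphic_on (\<lambda>t. P t * Q t) U"
  unfolding fps_coeffs_holomorphic_on_def fps_mult_nth by (auto intro!: holomorphic_intros)

lemma fps_coeffs_tendsto_mult:
  "fps_coeffs_tendsto P P' F \<Longrightarrow> fps_coeffs_tendsto Q Q' F \<Longrightarrow>
    fps_coeffs_tendsto (\<lambda>t. P t * Q t) (P' * Q') F"
  unfolding fps_coeffs_tendsto_def fps_mult_nth by (auto intro!: tendsto_intros)

lemma fps_coeffs_tendsto_add: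
  "fps_coeffs_tendsto P P' F \<Longrightarrow> fps_coeffs_tendsto Q Q' F \<Longrightarrow>
    fps_coeffs_tendsto (\<lambda>t. P t + Q t) (P' + Q') F"
  unfolding fps_coeffs_tendsto_def by (auto intro!: tendsto_intros)

lemma fps_coeffs_tendsto_fps_cutoff: "fps_coeffs_tendsto (\<lambda>m. fps_cutoff m D) D sequentially"
  unfolding fps_coeffs_tendsto_def
proof
  fix i
  have "\<forall>\<^sub>F m in sequentially. fps_cutoff m D $ i = D $ i"
    by (rule eventually_sequentiallyI[of "Suc i"]) simp
  then show "(\<lambda>m. fps_cutoff m D $ i) \<longlonglongrightarrow> D $ i"
    by (rule tendsto_eventually)
qed

lemma fps_coeffs_holomorphic_power:
  "fps_coeffs_holomorphic_on P U \<Longrightarrow> fps_coeffs_holomorphic_on (\<lambda>t. P t ^ k) U"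
  by (induction k) (auto simp: fps_coeffs_holomorphic_const fps_coeffs_holomorphic_mult)

lemma fps_coeffs_tendsto_power:
  "fps_coeffs_tendsto P P' F \<Longrightarrow> fps_coeffs_tendsto (\<lambda>t. P t ^ k) (P' ^ k) F"
  by (induction k) (auto simp: fps_coeffs_tendsto_const fps_coeffs_tendsto_mult)

lemma fps_coeffs_holomorphic_compose:
  assumes "fps_coeffs_holomorphic_on P U" "fps_coeffs_holomorphic_on Q U"
  shows "fps_coeffs_holomorphic_on (\<lambda>t. P t oo Q t) U"
  using assms fps_coeffs_holomorphic_power[OF assms(2)]
  unfolding fps_coeffs_holomorphic_on_def fps_compose_nth by (auto intro!: holomorphic_intros)

lemma fps_coeffs_tendsto_compose:
  assumes "fps_coeffs_tendsto P P' F" "fps_coeffs_tendsto Q Q' F"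
  shows "fps_coeffs_tendsto (\<lambda>t. P t oo Q t) (P' oo Q') F"
  using assms fps_coeffs_tendsto_power[OF assms(2)]
  unfolding fps_coeffs_tendsto_def fps_compose_nth by (auto intro!: tendsto_intros)

lemma fps_inv_nth: "fps_inv a $ n = compinv a n"
  by (simp add: fps_inv_def)

lemma fps_inv_nth_1: "fps_inv a $ 1 = 1 / a $ 1"
  by (simp add: fps_inv_nth)

text \<open>The recursion defining compinv divides only by powers of the linear coefficient.\<close>

lemma fps_coeffs_holomorphic_fps_inv:
  assumes P: "fps_coeffs_holomorphic_on P U" and P1: "\<And>t. t \<in> U \<Longrightarrow> P t $ 1 \<noteq> 0"
  shows "fps_coeffs_holomorphic_on (\<lambda>t. fps_inv (P t)) U"
proof -
  have "\<forall>j\<le>n. (\<lambda>t. compinv (P t) j) holomorphic_on U" for n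
  proof (induction n)
    case (Suc n)
    then have "(\<lambda>t. compinv (P t) (Suc n)) holomorphic_on U"
      using fps_coeffs_holomorphic_power[OF P] P P1 unfolding fps_coeffs_holomorphic_on_def
      by (auto intro!: holomorphic_intros)
    with Suc show ?case by (auto simp: le_Suc_eq)
  qed simp
  then show ?thesis unfolding fps_coeffs_holomorphic_on_def fps_inv_nth by blast
qed

lemma fps_coeffs_tendsto_fps_inv:
  assumes P: "fps_coeffs_tendsto P P' F" and P'1: "P' $ 1 \<noteq> 0"
  shows "fps_coeffs_tendsto (\<lambda>t. fps_inv (P t)) (fps_inv P') F"
proof -
  have "\<forall>j\<le>n. ((\<lambda>t. compinv (P t) j) \<longlongrightarrow> compinv P' j) F" for n
  proof (induction n)
    case (Suc n)
    then have "((\<lambda>t. compinv (P t) (Suc n)) \<longlongrightarrow> compinv P' (Suc n)) F"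
      using fps_coeffs_tendsto_power[OF P] P P'1 unfolding fps_coeffs_tendsto_def
      by (auto intro!: tendsto_intros)
    with Suc show ?case by (auto simp: le_Suc_eq)
  qed simp
  then show ?thesis unfolding fps_coeffs_tendsto_def fps_inv_nth by blast
qed

lemma word_eval_Nil [simp]: "word_eval cmp one a ai b bi [] = one"
  and word_eval_Cons [simp]:
    "word_eval cmp one a ai b bi (l # w) = cmp (letter_val a ai b bi l) (word_eval cmp one a ai b bi w)"
  by (simp_all add: word_eval_def)

lemma fps_coeffs_holomorphic_word_eval:
  assumes "fps_coeffs_holomorphic_on P1 U" "fps_coeffs_holomorphic_on P2 U"
    "fps_coeffs_holomorphic_on P3 U" "fps_coeffs_holomorphic_on P4 U"
  shows "fps_coeffs_holomorphic_on
    (\<lambda>t. word_eval (\<lambda>P Q. P oo Q) fps_X (P1 t) (P2 t) (P3 t) (P4 t) w) U"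
proof (induction w)
  case (Cons l w)
  have "fps_coeffs_holomorphic_on (\<lambda>t. letter_val (P1 t) (P2 t) (P3 t) (P4 t) l) U"
    using assms by (cases l) auto
  with Cons show ?case by (simp add: fps_coeffs_holomorphic_compose)
qed (simp add: fps_coeffs_holomorphic_const)

lemma fps_coeffs_tendsto_word_eval:
  assumes "fps_coeffs_tendsto P1 Q1 F" "fps_coeffs_tendsto P2 Q2 F"
    "fps_coeffs_tendsto P3 Q3 F" "fps_coeffs_tendsto P4 Q4 F"
  shows "fps_coeffs_tendsto (\<lambda>t. word_eval (\<lambda>P Q. P oo Q) fps_X (P1 t) (P2 t) (P3 t) (P4 t) w)
    (word_eval (\<lambda>P Q. P oo Q) fps_X Q1 Q2 Q3 Q4 w) F"
proof (induction w)
  case (Cons l w)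
  have "fps_coeffs_tendsto (\<lambda>t. letter_val (P1 t) (P2 t) (P3 t) (P4 t) l)
      (letter_val Q1 Q2 Q3 Q4 l) F"
    using assms by (cases l) auto
  with Cons show ?case by (simp add: fps_coeffs_tendsto_compose)
qed (simp add: fps_coeffs_tendsto_const)

lemma fps_compose_nth_1:
  fixes a b :: "'a::comm_ring_1 fps"
  shows "b $ 0 = 0 \<Longrightarrow> (a oo b) $ 1 = a $ 1 * b $ 1"
  by (simp add: fps_compose_nth numeral_2_eq_2 fps_mult_nth)

definition fps_conj :: "complex fps \<Rightarrow> complex fps \<Rightarrow> complex fps" where
  "fps_conj G K = fps_inv K oo (G oo K)"

lemma fps_conj_nth_1:
  assumes "K $ 0 = 0" "K $ 1 \<noteq> 0" "G $ 0 = 0"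
  shows "fps_conj G K $ 1 = G $ 1"
proof -
  have "fps_conj G K $ 1 = fps_inv K $ 1 * (G oo K) $ 1"
    unfolding fps_conj_def by (rule fps_compose_nth_1) (simp add: assms)
  also have "(G oo K) $ 1 = G $ 1 * K $ 1"
    by (rule fps_compose_nth_1) (simp add: assms)
  finally show ?thesis
    using assms by (simp add: fps_inv_nth_1 del: One_nat_def)
qed

lemma fps_coeffs_holomorphic_word_conj:
  assumes P: "fps_coeffs_holomorphic_on P U"
    and P01: "\<And>t. t \<in> U \<Longrightarrow> P t $ 0 = 0 \<and> P t $ 1 \<noteq> 0" and G: "G $ 0 = 0" "G $ 1 \<noteq> 0"
  shows "fps_coeffs_holomorphic_on (\<lambda>t. fps_word w F (fps_conj G (P t))) U"
proof -
  have conj: "fps_coeffs_holomorphic_on (\<lambda>t. fps_conj G (P t)) U"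
    unfolding fps_conj_def
    using P01 by (intro fps_coeffs_holomorphic_compose fps_coeffs_holomorphic_fps_inv P
        fps_coeffs_holomorphic_const) auto
  have "fps_coeffs_holomorphic_on (\<lambda>t. fps_inv (fps_conj G (P t))) U"
    using P01 G by (intro fps_coeffs_holomorphic_fps_inv conj) (simp add: fps_conj_nth_1 del: One_nat_def)
  with conj show ?thesis
    unfolding fps_word_def by (intro fps_coeffs_holomorphic_word_eval fps_coeffs_holomorphic_const)
qed

lemma fps_coeffs_tendsto_word_conj:
  assumes P: "fps_coeffs_tendsto P K F"
    and K: "K $ 0 = 0" "K $ 1 \<noteq> 0" and G: "G $ 0 = 0" "G $ 1 \<noteq> 0"
  shows "fps_coeffs_tendsto (\<lambda>t. fps_word w E (fps_conj G (P t))) (fps_word w E (fps_conj G K)) F"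
proof -
  have conj: "fps_coeffs_tendsto (\<lambda>t. fps_conj G (P t)) (fps_conj G K) F"
    unfolding fps_conj_def
    by (intro fps_coeffs_tendsto_compose fps_coeffs_tendsto_fps_inv P K fps_coeffs_tendsto_const)
  have "fps_coeffs_tendsto (\<lambda>t. fps_inv (fps_conj G (P t))) (fps_inv (fps_conj G K)) F"
    using K G by (intro fps_coeffs_tendsto_fps_inv conj) (simp add: fps_conj_nth_1 del: One_nat_def)
  with conj show ?thesis
    unfolding fps_word_def by (intro fps_coeffs_tendsto_word_eval fps_coeffs_tendsto_const)
qed

section \<open>Germs and their Taylor series\<close>

abbreviation germ_fps :: "(complex \<Rightarrow> complex) \<Rightarrow> complex fps" where
  "germ_fps h \<equiv> fps_expansion h 0"

lemma Diff0_iff_germ_fps: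
  "h \<in> Diff0 \<longleftrightarrow> h analytic_on {0} \<and> germ_fps h $ 0 = 0 \<and> germ_fps h $ 1 \<noteq> 0"
  by (simp add: Diff0_def fps_expansion_def)

lemma Diff0_has_fps_expansion: "h \<in> Diff0 \<Longrightarrow> h has_fps_expansion germ_fps h"
  by (simp add: Diff0_def analytic_at_imp_has_fps_expansion_0)

lemma germ_fps_ident: "germ_fps (\<lambda>z. z) = fps_X"
  by (rule fps_expansion_eqI) (rule has_fps_expansion_fps_X)

lemma ident_in_Diff0: "(\<lambda>z. z) \<in> Diff0"
  by (simp add: Diff0_def)

lemma comp_has_fps_expansion_Diff0:
  assumes "f \<in> Diff0" "g \<in> Diff0"
  shows "(f \<circ> g) has_fps_expansion (germ_fps f oo germ_fps g)"
  using assms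
  by (intro has_fps_expansion_compose Diff0_has_fps_expansion) (auto simp: Diff0_iff_germ_fps)

lemma germ_fps_comp:
  "f \<in> Diff0 \<Longrightarrow> g \<in> Diff0 \<Longrightarrow> germ_fps (f \<circ> g) = germ_fps f oo germ_fps g"
  by (rule fps_expansion_eqI) (rule comp_has_fps_expansion_Diff0)

lemma comp_in_Diff0:
  assumes "f \<in> Diff0" "g \<in> Diff0"
  shows "f \<circ> g \<in> Diff0"
proof -
  have "(germ_fps f oo germ_fps g) $ 1 = germ_fps f $ 1 * germ_fps g $ 1"
    using assms by (intro fps_compose_nth_1) (simp add: Diff0_iff_germ_fps)
  then show ?thesis
    using assms has_fps_expansion_imp_analytic_0[OF comp_has_fps_expansion_Diff0[OF assms]]
    by (simp add: Diff0_iff_germ_fps germ_fps_comp del: One_nat_def)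
qed

lemma germ_eq_iff_germ_fps:
  assumes "f analytic_on {0}" "g analytic_on {0}"
  shows "germ_eq f g \<longleftrightarrow> germ_fps f = germ_fps g"
proof
  assume "germ_eq f g"
  then show "germ_fps f = germ_fps g"
    unfolding germ_eq_def by (rule fps_expansion_cong)
next
  assume eq: "germ_fps f = germ_fps g"
  have "f has_fps_expansion germ_fps f" "g has_fps_expansion germ_fps g"
    using assms analytic_at_imp_has_fps_expansion_0 by auto
  then have "\<forall>\<^sub>F z in nhds 0. eval_fps (germ_fps f) z = f z"
      "\<forall>\<^sub>F z in nhds 0. eval_fps (germ_fps f) z = g z"
    using eq by (auto simp: has_fps_expansion_def)
  then show "germ_eq f g"
    unfolding germ_eq_def by eventually_elim simp
qed

lemma Diff0_has_local_inverse:
  assumes "f \<in> Diff0"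
  shows "\<exists>k. k \<in> Diff0 \<and> germ_eq (f \<circ> k) id \<and> germ_eq (k \<circ> f) id"
proof -
  from assms obtain S where S: "open S" "0 \<in> S" "f holomorphic_on S"
    and f0: "f 0 = 0" and f'0: "deriv f 0 \<noteq> 0"
    by (auto simp: Diff0_def analytic_at)
  obtain r where r: "r > 0" "ball 0 r \<subseteq> S" "open (f ` ball 0 r)" "inj_on f (ball 0 r)"
    using has_complex_derivative_locally_invertible[OF S(3) S(2) S(1) f'0] by blast
  have "f holomorphic_on ball 0 r"
    using S(3) r(2) holomorphic_on_subset by blast
  then obtain k where k: "k holomorphic_on f ` ball 0 r"
    "\<And>z. z \<in> ball 0 r \<Longrightarrow> deriv f z * deriv k (f z) = 1"
    "\<And>z. z \<in> ball 0 r \<Longrightarrow> k (f z) = z"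
    using holomorphic_has_inverse[OF _ open_ball r(4)] by blast
  have 0: "0 \<in> ball (0::complex) r" using r by simp
  then have f0_in: "0 \<in> f ` ball 0 r" using f0 by (metis image_eqI)
  have "k \<in> Diff0"
    using k(1) r(3) f0_in k(2,3)[OF 0] f0 by (auto simp: Diff0_def analytic_at)
  moreover have "germ_eq (k \<circ> f) id"
    unfolding germ_eq_def using eventually_nhds_in_open[OF open_ball 0]
    by (rule eventually_mono) (simp add: k(3))
  moreover have "germ_eq (f \<circ> k) id"
    unfolding germ_eq_def using eventually_nhds_in_open[OF r(3) f0_in]
    by (rule eventually_mono) (auto simp: k(3))
  ultimately show ?thesis by blast
qed

lemma germ_inv_in_Diff0: "f \<in> Diff0 \<Longrightarrow> germ_inv f \<in> Diff0"
  and germ_eq_comp_germ_inv: "f \<in> Diff0 \<Longrightarrow> germ_eq (f \<circ> germ_inv f) id"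
  using someI_ex[OF Diff0_has_local_inverse] unfolding germ_inv_def by auto

lemma germ_fps_germ_inv:
  assumes f: "f \<in> Diff0"
  shows "germ_fps (germ_inv f) = fps_inv (germ_fps f)"
proof -
  let ?F = "germ_fps f" and ?K = "germ_fps (germ_inv f)"
  have k: "germ_inv f \<in> Diff0" using f by (rule germ_inv_in_Diff0)
  have "?F oo ?K = germ_fps (f \<circ> germ_inv f)"
    using f k by (simp add: germ_fps_comp)
  also have "\<dots> = germ_fps (\<lambda>z. z)"
    using germ_eq_comp_germ_inv[OF f] comp_in_Diff0[OF f k] ident_in_Diff0
    by (subst germ_eq_iff_germ_fps[symmetric]) (auto simp: Diff0_def id_def)
  finally have right_inv: "?F oo ?K = fps_X" by (simp add: germ_fps_ident)
  have F: "?F $ 0 = 0" "?F $ 1 \<noteq> 0" "?K $ 0 = 0"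
    using f k by (auto simp: Diff0_iff_germ_fps)
  have "fps_inv ?F = fps_inv ?F oo (?F oo ?K)" using right_inv by simp
  also have "\<dots> = (fps_inv ?F oo ?F) oo ?K"
    using F by (intro fps_compose_assoc) auto
  also have "\<dots> = ?K" using F by (simp add: fps_inv)
  finally show ?thesis by simp
qed

lemma word_eval_comp_Diff0:
  assumes "a \<in> Diff0" "ai \<in> Diff0" "b \<in> Diff0" "bi \<in> Diff0"
  shows "word_eval (\<lambda>p q. p \<circ> q) (\<lambda>z. z) a ai b bi w \<in> Diff0 \<and>
    germ_fps (word_eval (\<lambda>p q. p \<circ> q) (\<lambda>z. z) a ai b bi w) =
    word_eval (\<lambda>P Q. P oo Q) fps_X (germ_fps a) (germ_fps ai) (germ_fps b) (germ_fps bi) w"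
proof (induction w)
  case (Cons l w)
  have "letter_val a ai b bi l \<in> Diff0"
    "germ_fps (letter_val a ai b bi l) =
      letter_val (germ_fps a) (germ_fps ai) (germ_fps b) (germ_fps bi) l"
    using assms by (cases l; simp)+
  with Cons comp_in_Diff0 germ_fps_comp show ?case
    by (simp only: word_eval_Cons)
qed (simp add: ident_in_Diff0 germ_fps_ident)

lemma germ_word_in_Diff0: "f \<in> Diff0 \<Longrightarrow> g \<in> Diff0 \<Longrightarrow> germ_word w f g \<in> Diff0"
  and germ_fps_germ_word: "f \<in> Diff0 \<Longrightarrow> g \<in> Diff0 \<Longrightarrow>
    germ_fps (germ_word w f g) = fps_word w (germ_fps f) (germ_fps g)"
  using word_eval_comp_Diff0[of f "germ_inv f" g "germ_inv g" w]
  unfolding germ_word_def fps_word_def by (simp_all add: germ_inv_in_Diff0 germ_fps_germ_inv)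

lemma germ_conj_in_Diff0: "h \<in> Diff0 \<Longrightarrow> g \<in> Diff0 \<Longrightarrow> germ_inv h \<circ> g \<circ> h \<in> Diff0"
  by (simp add: comp_in_Diff0 germ_inv_in_Diff0)

lemma germ_fps_germ_conj:
  assumes "h \<in> Diff0" "g \<in> Diff0"
  shows "germ_fps (germ_inv h \<circ> g \<circ> h) = fps_conj (germ_fps g) (germ_fps h)"
proof -
  have "germ_fps (germ_inv h \<circ> g \<circ> h) = (fps_inv (germ_fps h) oo germ_fps g) oo germ_fps h"
    using assms by (simp add: germ_fps_comp comp_in_Diff0 germ_inv_in_Diff0 germ_fps_germ_inv)
  also have "\<dots> = fps_conj (germ_fps g) (germ_fps h)"
    unfolding fps_conj_def
    using assms by (intro fps_compose_assoc[symmetric]) (auto simp: Diff0_iff_germ_fps)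
  finally show ?thesis .
qed

lemma germ_word_conj_eq_id_iff:
  assumes "f \<in> Diff0" "g \<in> Diff0" "h \<in> Diff0"
  shows "germ_eq (germ_word w f (germ_inv h \<circ> g \<circ> h)) id \<longleftrightarrow>
    fps_word w (germ_fps f) (fps_conj (germ_fps g) (germ_fps h)) = fps_X"
proof -
  let ?W = "germ_word w f (germ_inv h \<circ> g \<circ> h)"
  have "?W \<in> Diff0"
    using assms by (simp add: germ_word_in_Diff0 germ_conj_in_Diff0)
  then have "germ_eq ?W (\<lambda>z. z) \<longleftrightarrow> germ_fps ?W = germ_fps (\<lambda>z. z)"
    using ident_in_Diff0 by (intro germ_eq_iff_germ_fps) (auto simp: Diff0_def)
  then show ?thesis
    using assms
    by (simp add: id_def germ_fps_ident germ_fps_germ_word germ_conj_in_Diff0 germ_fps_germ_conj)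
qed

section \<open>The analytic topology\<close>

lemma germ_norm_lessE:
  assumes "germ_norm r d < ereal e"
  obtains F where "F holomorphic_on ball 0 r" "germ_eq F d"
    "\<And>z. z \<in> ball 0 r \<Longrightarrow> norm (F z) \<le> e"
proof -
  have ex: "\<exists>F. extends_to_ball r d F"
    using assms by (auto simp: germ_norm_def split: if_splits)
  define F where "F = (SOME F. extends_to_ball r d F)"
  have F: "extends_to_ball r d F"
    unfolding F_def by (rule someI_ex[OF ex])
  have "(SUP z\<in>ball 0 r. ereal (norm (F z))) < ereal e"
    using assms ex by (simp add: germ_norm_def F_def)
  then have "norm (F z) \<le> e" if "z \<in> ball 0 r" for z
    using that SUP_lessD by fastforce
  with F that show ?thesis by (auto simp: extends_to_ball_def)
qed

lemma germ_eq_imp_eq_on_ball: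
  assumes "F holomorphic_on ball 0 r" "p holomorphic_on ball 0 r" "germ_eq F p"
    and z: "z \<in> ball 0 r"
  shows "F z = p z"
proof -
  obtain d where d: "d > 0" "\<And>x. dist x 0 < d \<Longrightarrow> F x = p x"
    using assms(3) unfolding germ_eq_def eventually_nhds_metric by blast
  have r: "r > 0" using z by (simp add: dist_norm) (meson norm_ge_zero le_less_trans)
  have "F z - p z = 0"
  proof (rule analytic_continuation[of "\<lambda>x. F x - p x" "ball 0 r" "ball 0 (min d r)" 0 z])
    show "(\<lambda>x. F x - p x) holomorphic_on ball 0 r"
      using assms by (intro holomorphic_intros)
    show "0 islimpt ball (0::complex) (min d r)"
      using d r by (simp add: islimpt_ball)
  qed (use r z d in \<open>auto simp: dist_commute\<close>)
  then show ?thesis by simp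
qed

lemma germ_norm_less_if_bounded:
  assumes p: "p holomorphic_on ball 0 r" and bound: "\<And>z. z \<in> ball 0 r \<Longrightarrow> norm (p z) \<le> M"
    and "M < e"
  shows "germ_norm r p < ereal e"
proof -
  have ex: "extends_to_ball r p p"
    by (simp add: extends_to_ball_def germ_eq_def p)
  define F where "F = (SOME F. extends_to_ball r p F)"
  have F: "extends_to_ball r p F"
    unfolding F_def by (rule someI[of "extends_to_ball r p", OF ex])
  have "F z = p z" if "z \<in> ball 0 r" for z
    using F p that germ_eq_imp_eq_on_ball by (auto simp: extends_to_ball_def)
  then have "(SUP z\<in>ball 0 r. ereal (norm (F z))) \<le> ereal M"
    by (intro SUP_least) (simp add: bound)
  also have "\<dots> < ereal e" using \<open>M < e\<close> by simp
  finally show ?thesis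
    using ex by (auto simp: germ_norm_def F_def[symmetric])
qed

text \<open>Cauchy's estimate on the circle of radius r/2.\<close>

lemma germ_fps_nth_diff_bound:
  assumes k: "k \<in> Diff0" and h: "h \<in> Diff0" and r: "r > 0"
    and less: "germ_norm r (\<lambda>z. k z - h z) < ereal e"
  shows "norm (germ_fps k $ i - germ_fps h $ i) \<le> e / (r / 2) ^ i"
proof -
  obtain F where F: "F holomorphic_on ball 0 r" "germ_eq F (\<lambda>z. k z - h z)"
    "\<And>z. z \<in> ball 0 r \<Longrightarrow> norm (F z) \<le> e"
    using germ_norm_lessE[OF less] by blast
  have "(\<lambda>z. k z - h z) has_fps_expansion germ_fps k - germ_fps h"
    using k h by (intro has_fps_expansion_diff Diff0_has_fps_expansion)
  then have "germ_fps k - germ_fps h = germ_fps (\<lambda>z. k z - h z)"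
    by (simp add: fps_expansion_eqI)
  also have "\<dots> = germ_fps F"
    using F(2) unfolding germ_eq_def by (rule fps_expansion_cong[symmetric])
  finally have "germ_fps k $ i - germ_fps h $ i = germ_fps F $ i"
    by (metis fps_sub_nth)
  also have "\<dots> = (deriv ^^ i) F 0 / fact i"
    by (simp add: fps_expansion_def)
  finally have coeff: "germ_fps k $ i - germ_fps h $ i = (deriv ^^ i) F 0 / fact i" .
  have Cauchy: "norm ((deriv ^^ i) F 0) \<le> fact i * e / (r / 2) ^ i"
  proof (rule Cauchy_inequality)
    have sub: "cball 0 (r / 2) \<subseteq> ball (0::complex) r" using r by auto
    then show "F holomorphic_on ball 0 (r / 2)"
      using F(1) ball_subset_cball holomorphic_on_subset by blast
    show "continuous_on (cball 0 (r / 2)) F"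
      using holomorphic_on_imp_continuous_on[OF F(1)] sub continuous_on_subset by blast
    show "norm (F x) \<le> e" if "norm (0 - x) = r / 2" for x
      using F(3) that r by simp
  qed (use r in auto)
  have "norm (germ_fps k $ i - germ_fps h $ i) = norm ((deriv ^^ i) F 0) / fact i"
    by (simp add: coeff norm_divide)
  also have "\<dots> \<le> fact i * e / (r / 2) ^ i / fact i"
    by (rule divide_right_mono[OF Cauchy]) simp
  also have "\<dots> = e / (r / 2) ^ i"
    by simp
  finally show ?thesis .
qed

lemma fps_coeffs_tendsto_germ_fps:
  assumes k: "\<And>m. k m \<in> Diff0" and h: "h \<in> Diff0"
    and less: "\<And>m. germ_norm 1 (\<lambda>z. k m z - h z) < ereal (\<epsilon> m)" and \<epsilon>: "\<epsilon> \<longlonglongrightarrow> 0"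
  shows "fps_coeffs_tendsto (\<lambda>m. germ_fps (k m)) (germ_fps h) sequentially"
  unfolding fps_coeffs_tendsto_def
proof
  fix i
  have "((\<lambda>m. germ_fps (k m) $ i - germ_fps h $ i) \<longlonglongrightarrow> 0)"
  proof (rule Lim_null_comparison)
    show "\<forall>\<^sub>F m in sequentially. norm (germ_fps (k m) $ i - germ_fps h $ i) \<le> 2 ^ i * \<epsilon> m"
      using germ_fps_nth_diff_bound[OF k h zero_less_one less] by (simp add: field_simps)
    show "(\<lambda>m. 2 ^ i * \<epsilon> m) \<longlonglongrightarrow> 0"
      using tendsto_mult_right_zero[OF \<epsilon>] by simp
  qed
  then show "(\<lambda>m. germ_fps (k m) $ i) \<longlonglongrightarrow> germ_fps h $ i"
    by (rule LIM_zero_cancel)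
qed

lemma word_conj_nonid_stable:
  assumes g: "g \<in> Diff0" and h: "h \<in> Diff0"
    and nonid: "fps_word w (germ_fps f) (fps_conj (germ_fps g) (germ_fps h)) \<noteq> fps_X"
  shows "\<exists>\<epsilon>>0. \<forall>k\<in>Diff0. germ_norm 1 (\<lambda>z. k z - h z) < ereal \<epsilon> \<longrightarrow>
    fps_word w (germ_fps f) (fps_conj (germ_fps g) (germ_fps k)) \<noteq> fps_X"
proof (rule ccontr)
  assume "\<not> ?thesis"
  then have "\<forall>\<epsilon>>0. \<exists>k\<in>Diff0. germ_norm 1 (\<lambda>z. k z - h z) < ereal \<epsilon> \<and>
      fps_word w (germ_fps f) (fps_conj (germ_fps g) (germ_fps k)) = fps_X"
    by auto
  from this[rule_format, of "inverse (Suc m)" for m]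
  have "\<forall>m. \<exists>k. k \<in> Diff0 \<and> germ_norm 1 (\<lambda>z. k z - h z) < ereal (inverse (Suc m)) \<and>
      fps_word w (germ_fps f) (fps_conj (germ_fps g) (germ_fps k)) = fps_X"
    by auto
  then obtain k where k: "\<And>m. k m \<in> Diff0"
    and less: "\<And>m. germ_norm 1 (\<lambda>z. k m z - h z) < ereal (inverse (Suc m))"
    and id: "\<And>m. fps_word w (germ_fps f) (fps_conj (germ_fps g) (germ_fps (k m))) = fps_X"
    by metis
  have "fps_coeffs_tendsto (\<lambda>m. fps_word w (germ_fps f) (fps_conj (germ_fps g) (germ_fps (k m))))
      (fps_word w (germ_fps f) (fps_conj (germ_fps g) (germ_fps h))) sequentially"
  proof (rule fps_coeffs_tendsto_word_conj)
    show "fps_coeffs_tendsto (\<lambda>m. germ_fps (k m)) (germ_fps h) sequentially"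
      by (rule fps_coeffs_tendsto_germ_fps[OF k h less LIMSEQ_inverse_real_of_nat])
  qed (use g h in \<open>simp_all add: Diff0_iff_germ_fps\<close>)
  then have "fps_coeffs_tendsto (\<lambda>m. fps_X)
      (fps_word w (germ_fps f) (fps_conj (germ_fps g) (germ_fps h))) sequentially"
    by (simp only: id)
  with nonid show False
    by (simp add: fps_coeffs_tendsto_def fps_eq_iff LIMSEQ_const_iff)
qed

lemma analytic_open_word_conj_nonid:
  assumes f: "f \<in> Diff0" and g: "g \<in> Diff0"
  shows "analytic_open {h\<in>Diff0. \<not> germ_eq (germ_word w f (germ_inv h \<circ> g \<circ> h)) id}"
  unfolding analytic_open_def
proof (intro conjI ballI)
  fix h assume "h \<in> {h\<in>Diff0. \<not> germ_eq (germ_word w f (germ_inv h \<circ> g \<circ> h)) id}"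
  then have "h \<in> Diff0" "fps_word w (germ_fps f) (fps_conj (germ_fps g) (germ_fps h)) \<noteq> fps_X"
    using germ_word_conj_eq_id_iff[OF f g] by auto
  from word_conj_nonid_stable[OF g this] obtain \<epsilon> where "\<epsilon> > 0" and
    "\<forall>k\<in>Diff0. germ_norm 1 (\<lambda>z. k z - h z) < ereal \<epsilon> \<longrightarrow>
      fps_word w (germ_fps f) (fps_conj (germ_fps g) (germ_fps k)) \<noteq> fps_X"
    by blast
  then show "\<exists>r>0. \<exists>\<epsilon>>0. \<forall>k\<in>Diff0. germ_norm r (\<lambda>z. k z - h z) < ereal \<epsilon> \<longrightarrow>
      k \<in> {h\<in>Diff0. \<not> germ_eq (germ_word w f (germ_inv h \<circ> g \<circ> h)) id}"
    using germ_word_conj_eq_id_iff[OF f g] zero_less_one by blast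
qed blast

section \<open>Density\<close>

lemma word_conj_nonid_fps_cutoff:
  assumes G: "G $ 0 = 0" "G $ 1 \<noteq> 0" and H: "H $ 0 = 0" "H $ 1 \<noteq> 0"
    and nonid: "fps_word w E (fps_conj G H) \<noteq> fps_X"
  obtains m where "fps_word w E (fps_conj G (K + fps_cutoff m (H - K))) \<noteq> fps_X"
proof -
  obtain n where n: "fps_word w E (fps_conj G H) $ n \<noteq> fps_X $ n"
    using nonid by (auto simp: fps_eq_iff)
  have "fps_coeffs_tendsto (\<lambda>m. K + fps_cutoff m (H - K)) (K + (H - K)) sequentially"
    by (intro fps_coeffs_tendsto_add fps_coeffs_tendsto_const fps_coeffs_tendsto_fps_cutoff)
  then have "fps_coeffs_tendsto (\<lambda>m. K + fps_cutoff m (H - K)) H sequentially"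
    by simp
  then have "fps_coeffs_tendsto (\<lambda>m. fps_word w E (fps_conj G (K + fps_cutoff m (H - K))))
      (fps_word w E (fps_conj G H)) sequentially"
    using G H by (intro fps_coeffs_tendsto_word_conj)
  then have "(\<lambda>m. fps_word w E (fps_conj G (K + fps_cutoff m (H - K))) $ n)
      \<longlonglongrightarrow> fps_word w E (fps_conj G H) $ n"
    by (simp add: fps_coeffs_tendsto_def)
  from tendsto_imp_eventually_ne[OF this n] obtain m
    where "fps_word w E (fps_conj G (K + fps_cutoff m (H - K))) $ n \<noteq> fps_X $ n"
    by (auto simp: eventually_sequentially)
  then have "fps_word w E (fps_conj G (K + fps_cutoff m (H - K))) \<noteq> fps_X"
    by auto
  then show thesis by (rule that)
qed

lemma has_fps_expansion_fps_cutoff: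
  fixes D :: "complex fps"
  shows "(\<lambda>z. \<Sum>i<m. D $ i * z ^ i) has_fps_expansion fps_cutoff m D"
proof -
  have cutoff: "fps_cutoff m D = (\<Sum>i<m. fps_const (D $ i) * fps_X ^ i)"
    by (rule fps_ext) (simp add: fps_sum_nth mult_delta_right)
  show ?thesis
    unfolding cutoff
    by (intro fps_expansion_intros)
qed

lemma open_connected_affine_nonzero:
  fixes a b :: complex
  assumes "a \<noteq> 0"
  shows "open {t. a + t * b \<noteq> 0} \<and> connected {t. a + t * b \<noteq> 0}"
proof (cases "b = 0")
  case False
  then have "a + t * b = 0 \<longleftrightarrow> t = - a / b" for t
    by (auto simp: field_simps add_eq_0_iff2 minus_equation_iff)
  then have "{t. a + t * b \<noteq> 0} = - {- a / b}"
    by auto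
  then show ?thesis by (simp add: connected_punctured_universe open_Compl)
qed (use assms in \<open>simp add: connected_UNIV\<close>)

lemma holomorphic_nonzero_arbitrarily_near:
  assumes hol: "\<phi> holomorphic_on U" and U: "open U" "connected U" "z \<in> U"
    and nonzero: "a \<in> U" "\<phi> a \<noteq> 0" and "\<delta> > 0"
  obtains t where "t \<in> U" "dist z t < \<delta>" "\<phi> t \<noteq> 0"
proof -
  obtain \<rho> where \<rho>: "\<rho> > 0" "ball z \<rho> \<subseteq> U"
    using U open_contains_ball by blast
  have "\<exists>t\<in>ball z (min \<delta> \<rho>). \<phi> t \<noteq> 0"
  proof (rule ccontr)
    assume "\<not> ?thesis"
    then have zero: "\<And>t. t \<in> ball z (min \<delta> \<rho>) \<Longrightarrow> \<phi> t = 0"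
      by blast
    have "\<phi> a = 0"
    proof (rule analytic_continuation[OF hol U(1,2) _ U(3) _ zero nonzero(1)])
      show "ball z (min \<delta> \<rho>) \<subseteq> U"
        using \<rho> by auto
      show "z islimpt ball z (min \<delta> \<rho>)"
        using \<rho> \<open>\<delta> > 0\<close> by (simp add: islimpt_ball)
    qed
    with nonzero(2) show False by simp
  qed
  with \<rho> that show thesis by auto
qed

lemma germ_norm_scaled_less:
  assumes q: "q holomorphic_on cball 0 r" and "e > 0"
  obtains \<delta> where "\<delta> > 0" "\<And>t. norm t < \<delta> \<Longrightarrow> germ_norm r (\<lambda>z. t * q z) < ereal e"
proof -
  have "compact (q ` cball 0 r)"
    using q by (intro compact_continuous_image holomorphic_on_imp_continuous_on) auto
  then have "bounded (q ` cball 0 r)"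
    by (rule compact_imp_bounded)
  then obtain M where M: "M > 0" "\<And>z. z \<in> cball 0 r \<Longrightarrow> norm (q z) \<le> M"
    unfolding bounded_pos by blast
  have "germ_norm r (\<lambda>z. t * q z) < ereal e" if t: "norm t < e / M" for t
  proof (rule germ_norm_less_if_bounded)
    show "(\<lambda>z. t * q z) holomorphic_on ball 0 r"
      using q ball_subset_cball by (intro holomorphic_intros) (rule holomorphic_on_subset)
    show "norm (t * q z) \<le> norm t * M" if "z \<in> ball 0 r" for z
      using M that by (simp add: norm_mult mult_left_mono)
    show "norm t * M < e"
      using t M by (simp add: field_simps)
  qed
  moreover have "e / M > 0"
    using M \<open>e > 0\<close> by simp
  ultimately show thesis
    using that by blast
qed

lemma word_conj_nonid_near_zero:
  assumes G: "G $ 0 = 0" "G $ 1 \<noteq> 0" and F: "F $ 0 = 0" "F $ 1 \<noteq> 0"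
    and T: "T $ 0 = 0" "(F + T) $ 1 \<noteq> 0"
    and nonid: "fps_word w E (fps_conj G (F + T)) \<noteq> fps_X" and "\<delta> > 0"
  obtains t where "norm t < \<delta>" "(F + fps_const t * T) $ 1 \<noteq> 0"
    "fps_word w E (fps_conj G (F + fps_const t * T)) \<noteq> fps_X"
proof -
  define P where "P t = F + fps_const t * T" for t
  define U where "U = {t. F $ 1 + t * T $ 1 \<noteq> 0}"
  have P01: "P t $ 0 = 0" "P t $ 1 = F $ 1 + t * T $ 1" for t
    using F T by (simp_all add: P_def)
  have U: "open U" "connected U" "0 \<in> U" "1 \<in> U"
    using open_connected_affine_nonzero[OF F(2)] F T by (auto simp: U_def)
  obtain n where n: "fps_word w E (fps_conj G (P 1)) $ n \<noteq> fps_X $ n"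
    using nonid by (auto simp: fps_eq_iff P_def)
  have "fps_coeffs_holomorphic_on (\<lambda>t. fps_word w E (fps_conj G (P t))) U"
    using P01 G by (intro fps_coeffs_holomorphic_word_conj)
      (auto simp: fps_coeffs_holomorphic_on_def P_def U_def intro!: holomorphic_intros)
  then have "(\<lambda>t. fps_word w E (fps_conj G (P t)) $ n - fps_X $ n) holomorphic_on U"
    by (auto simp: fps_coeffs_holomorphic_on_def intro!: holomorphic_intros)
  from holomorphic_nonzero_arbitrarily_near[OF this U _ \<open>\<delta> > 0\<close>] n
  obtain t where "t \<in> U" "dist 0 t < \<delta>" "fps_word w E (fps_conj G (P t)) $ n \<noteq> fps_X $ n"
    by auto
  then have "norm t < \<delta>" "(F + fps_const t * T) $ 1 \<noteq> 0"
    "fps_word w E (fps_conj G (F + fps_const t * T)) \<noteq> fps_X"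
    by (auto simp: P_def U_def)
  then show thesis by (rule that)
qed

lemma Diff0_near_word_conj_nonid:
  assumes g: "g \<in> Diff0" and H: "H \<in> FDiff0"
    and nonid: "fps_word w (germ_fps f) (fps_conj (germ_fps g) H) \<noteq> fps_X"
    and f0: "f0 \<in> Diff0" and "r > 0" "e > 0"
  obtains k where "k \<in> Diff0" "fps_word w (germ_fps f) (fps_conj (germ_fps g) (germ_fps k)) \<noteq> fps_X"
    "germ_norm r (\<lambda>z. k z - f0 z) < ereal e"
proof -
  define F0 where "F0 = germ_fps f0"
  have G: "germ_fps g $ 0 = 0" "germ_fps g $ 1 \<noteq> 0" and F0: "F0 $ 0 = 0" "F0 $ 1 \<noteq> 0"
    and H01: "H $ 0 = 0" "H $ 1 \<noteq> 0"
    using g f0 H by (auto simp: Diff0_iff_germ_fps FDiff0_def F0_def)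
  obtain m where m: "fps_word w (germ_fps f) (fps_conj (germ_fps g) (F0 + fps_cutoff m (H - F0)))
      \<noteq> fps_X"
    using word_conj_nonid_fps_cutoff[OF G H01 nonid] by blast
  define T where "T = fps_cutoff m (H - F0)"
  define q where "q z = (\<Sum>i<m. (H - F0) $ i * z ^ i)" for z
  have "q holomorphic_on cball 0 r"
    unfolding q_def by (intro holomorphic_intros)
  then obtain \<delta> where \<delta>: "\<delta> > 0" "\<And>t. norm t < \<delta> \<Longrightarrow> germ_norm r (\<lambda>z. t * q z) < ereal e"
    using germ_norm_scaled_less \<open>e > 0\<close> by blast
  have T: "T $ 0 = 0" "(F0 + T) $ 1 \<noteq> 0"
    using F0 H01 by (auto simp: T_def)
  obtain t where t: "norm t < \<delta>" "(F0 + fps_const t * T) $ 1 \<noteq> 0"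
    "fps_word w (germ_fps f) (fps_conj (germ_fps g) (F0 + fps_const t * T)) \<noteq> fps_X"
    using word_conj_nonid_near_zero[OF G F0 T m[folded T_def] \<delta>(1)] by blast
  have k_fps: "(\<lambda>z. f0 z + t * q z) has_fps_expansion F0 + fps_const t * T"
    unfolding F0_def T_def q_def
    by (intro has_fps_expansion_add Diff0_has_fps_expansion f0 has_fps_expansion_cmult_left
        has_fps_expansion_fps_cutoff)
  then have germ: "germ_fps (\<lambda>z. f0 z + t * q z) = F0 + fps_const t * T"
    by (rule fps_expansion_eqI)
  have "(\<lambda>z. f0 z + t * q z) \<in> Diff0"
    using has_fps_expansion_imp_analytic_0[OF k_fps] germ F0 T t(2)
    by (simp add: Diff0_iff_germ_fps del: One_nat_def)
  moreover have "germ_norm r (\<lambda>z. (f0 z + t * q z) - f0 z) < ereal e"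
    using \<delta>(2) t(1) by simp
  ultimately show thesis
    using that germ t(3) by simp
qed

lemma analytic_dense_word_conj_nonid:
  assumes f: "f \<in> Diff0" and g: "g \<in> Diff0" and H: "H \<in> FDiff0"
    and nonid: "fps_word w (germ_fps f) (fps_conj (germ_fps g) H) \<noteq> fps_X"
  shows "analytic_dense {h\<in>Diff0. \<not> germ_eq (germ_word w f (germ_inv h \<circ> g \<circ> h)) id}"
  unfolding analytic_dense_def
proof (intro ballI allI impI)
  fix f0 :: "complex \<Rightarrow> complex" and r e :: real
  assume "f0 \<in> Diff0" "r > 0" "e > 0"
  from Diff0_near_word_conj_nonid[OF g H nonid this] obtain k where "k \<in> Diff0"
    "fps_word w (germ_fps f) (fps_conj (germ_fps g) (germ_fps k)) \<noteq> fps_X"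
    "germ_norm r (\<lambda>z. k z - f0 z) < ereal e" .
  then show "\<exists>k\<in>{h\<in>Diff0. \<not> germ_eq (germ_word w f (germ_inv h \<circ> g \<circ> h)) id}.
      k \<in> Diff0 \<and> germ_norm r (\<lambda>z. k z - f0 z) < ereal e"
    using germ_word_conj_eq_id_iff[OF f g] by blast
qed

theorem theorem2p5:
  fixes f g :: "complex \<Rightarrow> complex" and w :: "letter list"
  assumes "f \<in> Diff0" and "g \<in> Diff0"
    and "\<not> germ_eq f id" and "\<not> germ_eq g id"
    and "w \<noteq> []" and "reduced_word w"
    and "\<exists>H\<in>FDiff0. fps_word w (fps_expansion f 0)
           (fps_inv H oo (fps_expansion g 0 oo H)) \<noteq> fps_X"
  shows "(\<exists>h\<in>Diff0. \<not> germ_eq (germ_word w f (germ_inv h \<circ> g \<circ> h)) id)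
    \<and> analytic_open {h\<in>Diff0. \<not> germ_eq (germ_word w f (germ_inv h \<circ> g \<circ> h)) id}
    \<and> analytic_dense {h\<in>Diff0. \<not> germ_eq (germ_word w f (germ_inv h \<circ> g \<circ> h)) id}"
proof -
  let ?S = "{h\<in>Diff0. \<not> germ_eq (germ_word w f (germ_inv h \<circ> g \<circ> h)) id}"
  obtain H where "H \<in> FDiff0" "fps_word w (germ_fps f) (fps_conj (germ_fps g) H) \<noteq> fps_X"
    using assms(7) unfolding fps_conj_def by blast
  from analytic_dense_word_conj_nonid[OF assms(1,2) this] have dense: "analytic_dense ?S" .
  from this[unfolded analytic_dense_def, rule_format, OF ident_in_Diff0 zero_less_one zero_less_one]
  obtain h where "h \<in> ?S"
    by blast
  then have "\<exists>h\<in>Diff0. \<not> germ_eq (germ_word w f (germ_inv h \<circ> g \<circ> h)) id"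
    by blast
  with dense analytic_open_word_conj_nonid[OF assms(1,2)] show ?thesis
    by blast
qed

end
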